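(* Let $\pi$ be a probability density on $(0,\infty)$ for which there exist $c>0$, $C>0$, $M_0>0$ such that $t\pi(t)\sim C/(\{1+\log(1+t)\}[1+\log\{1+\log(1+t)\}]^{1+c})$ as $t\to\infty$ and, for all $t>0$, $$t\pi(t)\le M_0\frac{1}{1+\log(1+1/t)}\frac{1}{1+\log(1+t)}\frac{1}{[1+\log\{1+\log(1+1/t)\}]^{1+c}}\frac{1}{[1+\log\{1+\log(1+t)\}]^{1+c}}.$$ For $\alpha>0$, $z\in\mathbb{R}$, $\gamma>0$, $t>0$ let $$f(\alpha,z,\gamma;t)=\int_0^\infty\frac{\alpha^\alpha\gamma}{\Gamma(\alpha)}\frac{e^{-\alpha/u}}{u^{1+\alpha}}\cdot\frac{t^\gamma e^{\gamma z}u\,\pi(t^\gamma e^{\gamma z}u)}{C/(\{1+\log(1+t)\}[1+\log\{1+\log(1+t)\}]^{1+c})}\,du.$$ Let $x_1,\dots,x_n\in\mathbb{R}^p$ and let $\mathcal{K},\mathcal{L}$ partition $\{1,\dots,n\}$, where $t_i>0$ is fixed for $i\in\mathcal{K}$ and $t_i=\exp(a_i+b_i\omega)$ for $i\in\mathcal{L}$ with fixed $a_i\in\mathbb{R}$, $b_i>0$ and $\omega>0$. Then there exists $M>0$ such that for all $i=1,\dots,n$, all $(\alpha,\tilde\beta,\gamma)\in(0,\infty)\times\mathbb{R}^p\times(0,\infty)$ and all sufficiently large $\omega$, $$f(\alpha,x_i^\top\tilde\beta,\gamma;t_i)\le\begin{cases}M(\min\{\alpha,\alpha^{1/2}\})\gamma,&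 i\in\mathcal{K},\\ M\,\omega(\log\omega)^{1+c}(\min\{\alpha,\alpha^{1/2}\})\gamma,& i\in\mathcal{L}.\end{cases}$$ *)

theory Defs
  imports "HOL-Analysis.Analysis" "HOL-Library.Landau_Symbols"
begin

definition ref_scale :: "real \<Rightarrow> real \<Rightarrow> real \<Rightarrow> real" where
  "ref_scale C c t = C / ((1 + ln (1 + t)) * (1 + ln (1 + ln (1 + t))) powr (1 + c))"

definition f_fun :: "(real \<Rightarrow> real) \<Rightarrow> real \<Rightarrow> real \<Rightarrow> real \<Rightarrow> real \<Rightarrow> real \<Rightarrow> real \<Rightarrow> ennreal" where
  "f_fun \<pi> C c \<alpha> z \<gamma> t =
     (\<integral>\<^sup>+ u \<in> {0<..}. ennreal
        ((\<alpha> powr \<alpha> * \<gamma> / Gamma \<alpha>) * (exp (- \<alpha> / u) / u powr (1 + \<alpha>)) *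
         ((t powr \<gamma> * exp (\<gamma> * z) * u * \<pi> (t powr \<gamma> * exp (\<gamma> * z) * u)) / ref_scale C c t)) \<partial>lborel)"

end

theory Submission
  imports Defs
begin

(* Writing s = t^gamma e^(gamma z), f(alpha, z, gamma; t) equals gamma / ref_scale t times the mean
   of s U pi(s U), where U is inverse-gamma distributed with shape and scale alpha (density p).
   If alpha <= 1, then u p(u) <= e alpha and u |-> s pi(s u) integrates to 1 over (0, inf), so the
   mean is at most e alpha. If alpha > 1, the pointwise hypothesis gives y pi(y) <= M0, since each
   logarithmic factor there is at most 1, so the mean is at most M0 <= M0 sqrt alpha.
   Finally 1 / ref_scale is a constant for the fixed t_i and O(omega (log omega)^(1+c)) along
   t = exp (a + b omega). *)

lemma nn_integral_incseq_SUP: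
  fixes f :: "'a \<Rightarrow> ennreal"
  assumes "incseq A" "range A \<subseteq> sets M" "f \<in> borel_measurable M"
  shows "(SUP n. \<integral>\<^sup>+x\<in>A n. f x \<partial>M) = (\<integral>\<^sup>+x\<in>(\<Union>n. A n). f x \<partial>M)"
  using SUP_emeasure_incseq[of A "density M f"] assms by (auto simp: emeasure_density)

lemma nn_integral_inverse_substitution_Icc:
  fixes f :: "real \<Rightarrow> real"
  assumes f: "f \<in> borel_measurable borel" and "0 < a" "a \<le> b"
  shows "(\<integral>\<^sup>+u\<in>{a..b}. ennreal (f u) \<partial>lborel) = (\<integral>\<^sup>+v\<in>{1/b..1/a}. ennreal (f (1/v) / v\<^sup>2) \<partial>lborel)"
proof -
  \<comment> \<open>\<open>nn_integral_substitution\<close> needs an increasing substitution: use \<open>-1/x\<close>, then reflect.\<close>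
  let ?g = "\<lambda>x::real. - 1 / x"
  have neg: "x < 0" if "x \<in> {-1/a..-1/b}" for x
  proof -
    have "0 < 1 / b" using \<open>0 < a\<close> \<open>a \<le> b\<close> by simp
    moreover have "x \<le> - 1 / b" using that by simp
    ultimately show ?thesis by linarith
  qed
  have "(\<integral>\<^sup>+u. ennreal (f u * indicator {?g (-1/a)..?g (-1/b)} u) \<partial>lborel)
      = (\<integral>\<^sup>+x. ennreal (f (?g x) * (1 / x\<^sup>2) * indicator {-1/a..-1/b} x) \<partial>lborel)"
  proof (rule nn_integral_substitution)
    show "set_borel_measurable borel {?g (-1/a)..?g (-1/b)} f"
      using f unfolding set_borel_measurable_def by measurable
    show "(?g has_real_derivative 1 / x\<^sup>2) (at x)" if "x \<in> {-1/a..-1/b}" for x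
      using neg[OF that] by (auto intro!: derivative_eq_intros simp: power2_eq_square)
    show "continuous_on {-1/a..-1/b} (\<lambda>x. 1 / x\<^sup>2)"
      by (intro continuous_intros) (use neg in fastforce)
  qed (use \<open>0 < a\<close> \<open>a \<le> b\<close> in \<open>auto simp: field_simps\<close>)
  also have "\<dots> = (\<integral>\<^sup>+v. ennreal (f (1/v) / v\<^sup>2 * indicator {1/b..1/a} v) \<partial>lborel)"
    using f by (subst nn_integral_real_affine[where c = "-1" and t = 0])
      (auto intro!: nn_integral_cong simp: indicator_def)
  finally show ?thesis
    using \<open>0 < a\<close> by (simp add: nn_integral_set_ennreal)
qed

lemma nn_integral_inverse_substitution_Ioi:
  fixes f :: "real \<Rightarrow> real"
  assumes f: "f \<in> borel_measurable borel"
  shows "(\<integral>\<^sup>+u\<in>{0<..}. ennreal (f u) \<partial>lborel) = (\<integral>\<^sup>+v\<in>{0<..}. ennreal (f (1/v) / v\<^sup>2) \<partial>lborel)"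
proof -
  define A where "A n = {1 / real (Suc n) .. real (Suc n)}" for n
  have "incseq A"
    by (intro monoI) (auto simp: A_def frac_le intro: order_trans)
  moreover have "(\<Union>n. A n) = {0<..}"
  proof (intro antisym subsetI)
    fix u :: real assume "u \<in> {0<..}"
    then have "0 < u" by simp
    obtain n :: nat where n: "max u (1/u) < n" using reals_Archimedean2 by blast
    then have "u \<in> A n" using \<open>0 < u\<close> by (auto simp: A_def field_simps)
    then show "u \<in> (\<Union>n. A n)" by blast
  qed (auto simp: A_def intro: less_le_trans[rotated])
  moreover have "(\<integral>\<^sup>+u\<in>A n. ennreal (f u) \<partial>lborel) = (\<integral>\<^sup>+v\<in>A n. ennreal (f (1/v) / v\<^sup>2) \<partial>lborel)" for n
  proof -
    have "1 / real (Suc n) \<le> real (Suc n)"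
      by (rule order_trans[of _ 1]) auto
    then show ?thesis
      using nn_integral_inverse_substitution_Icc[OF f, of "1 / real (Suc n)" "real (Suc n)"]
      by (simp add: A_def)
  qed
  moreover have "range A \<subseteq> sets lborel"
    by (auto simp: A_def)
  ultimately show ?thesis
    using f nn_integral_incseq_SUP[of A lborel "\<lambda>u. ennreal (f u)"]
      nn_integral_incseq_SUP[of A lborel "\<lambda>v. ennreal (f (1/v) / v\<^sup>2)"]
    by simp
qed

lemma nn_integral_powr_exp_Ioi:
  assumes "0 < a" "0 < b"
  shows "(\<integral>\<^sup>+v\<in>{0<..}. ennreal (v powr (a - 1) * exp (- b * v)) \<partial>lborel)
    = ennreal (Gamma a / b powr a)"
proof -
  let ?I = "\<integral>\<^sup>+v\<in>{0<..}. ennreal (v powr (a - 1) * exp (- b * v)) \<partial>lborel"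
  have "ennreal (Gamma a)
      = b * (\<integral>\<^sup>+v. ennreal (indicator {0..} (b * v) * (b * v) powr (a - 1) / exp (b * v)) \<partial>lborel)"
    using assms
    by (subst Gamma_conv_nn_integral_real, simp, subst nn_integral_real_affine[where c = b and t = 0])
      auto
  also have "\<dots> = b * (\<integral>\<^sup>+v. ennreal (b powr (a - 1))
      * (ennreal (v powr (a - 1) * exp (- b * v)) * indicator {0<..} v) \<partial>lborel)"
    using assms by (intro arg_cong2[where f = "(*)"] nn_integral_cong)
      (auto simp: indicator_def powr_mult exp_minus field_simps zero_le_mult_iff simp flip: ennreal_mult')
  also have "\<dots> = ennreal (b powr a) * ?I"
  proof -
    have "ennreal b * ennreal (b powr (a - 1)) = ennreal (b powr a)"
      using assms by (simp add: powr_diff flip: ennreal_mult)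
    then show ?thesis
      by (subst nn_integral_cmult) (auto simp: mult.assoc [symmetric])
  qed
  finally show ?thesis
    using assms
    by (simp add: mult.commute[of "ennreal (b powr a)"] ennreal_mult_divide_eq flip: divide_ennreal)
qed

definition inv_gamma_pdf :: "real \<Rightarrow> real \<Rightarrow> real \<Rightarrow> real" where
  "inv_gamma_pdf a b u = b powr a / Gamma a * exp (- b / u) / u powr (1 + a)"

lemma borel_measurable_inv_gamma_pdf [measurable]: "inv_gamma_pdf a b \<in> borel_measurable borel"
  unfolding inv_gamma_pdf_def by measurable

lemma inv_gamma_pdf_nonneg: "0 < a \<Longrightarrow> 0 \<le> inv_gamma_pdf a b u"
  unfolding inv_gamma_pdf_def by simp

lemma nn_integral_inv_gamma_pdf:
  assumes "0 < a" "0 < b"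
  shows "(\<integral>\<^sup>+u\<in>{0<..}. ennreal (inv_gamma_pdf a b u) \<partial>lborel) = 1"
proof -
  have "inv_gamma_pdf a b (1/v) / v\<^sup>2 = b powr a / Gamma a * (v powr (a - 1) * exp (- b * v))"
    if "0 < v" for v
    using that by (simp add: inv_gamma_pdf_def powr_divide powr_diff powr_add field_simps power2_eq_square)
  then have "(\<integral>\<^sup>+u\<in>{0<..}. ennreal (inv_gamma_pdf a b u) \<partial>lborel)
      = (\<integral>\<^sup>+v\<in>{0<..}. ennreal (b powr a / Gamma a) * ennreal (v powr (a - 1) * exp (- b * v)) \<partial>lborel)"
    using assms by (subst nn_integral_inverse_substitution_Ioi)
      (auto intro!: nn_integral_cong simp: indicator_def simp flip: ennreal_mult)
  also have "\<dots> = ennreal (b powr a / Gamma a) * ennreal (Gamma a / b powr a)"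
    using nn_integral_powr_exp_Ioi[OF assms] by (simp add: nn_integral_cmult mult.assoc)
  also have "\<dots> = 1"
    using assms by (simp flip: ennreal_mult) (metis Gamma_real_pos less_irrefl)
  finally show ?thesis .
qed

lemma exp_neg_div_le_powr:
  fixes a u :: real
  assumes "0 \<le> a" "0 < u"
  shows "exp (- a / u) \<le> u powr a"
proof -
  have "1 - 1 / u \<le> ln u"
    using ln_le_minus_one[of "1 / u"] \<open>0 < u\<close> by (simp add: ln_div)
  then have "- a / u \<le> a * ln u"
    using mult_left_mono[OF _ \<open>0 \<le> a\<close>] \<open>0 \<le> a\<close> by (fastforce simp: algebra_simps)
  then show ?thesis
    using \<open>0 < u\<close> by (simp add: powr_def)
qed

lemma Gamma_plus_one_ge_exp_neg_one:
  fixes a :: real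
  assumes "0 < a" "a \<le> 1"
  shows "exp (- 1) \<le> Gamma (a + 1)"
proof -
  have "\<exists>\<xi>. 1 < \<xi> \<and> \<xi> < a + 1 \<and> ln_Gamma (a + 1) - ln_Gamma 1 = ((a + 1) - 1) * Digamma \<xi>"
    using assms by (intro MVT2 derivative_intros impI allI) (auto elim!: nonpos_Ints_cases)
  then obtain \<xi> where \<xi>: "1 < \<xi>" "\<xi> < a + 1" and mvt: "ln_Gamma (a + 1) - ln_Gamma 1 = a * Digamma \<xi>"
    by auto
  have "- 1 \<le> Digamma (1 :: real)"
    using euler_mascheroni_less_13_over_22 by simp
  also have "\<dots> \<le> Digamma \<xi>"
    using \<xi> by (intro Digamma_real_mono) auto
  finally have "- 1 \<le> ln_Gamma (a + 1)"
    using mvt assms mult_left_mono[of "- 1" "Digamma \<xi>" a] by (simp add: ln_Gamma_real_pos)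
  then show ?thesis
    using Gamma_real_pos_exp[of "a + 1"] assms by simp
qed

lemma powr_self_div_Gamma_le:
  fixes a :: real
  assumes "0 < a" "a \<le> 1"
  shows "a powr a / Gamma a \<le> exp 1 * a"
proof -
  have "Gamma (a + 1) = a * Gamma a"
    using assms by (simp add: Gamma_plus1 nonpos_Ints_def)
  then have "a powr a / Gamma a = a * (a powr a / Gamma (a + 1))"
    using assms Gamma_real_pos[of a] by (simp add: field_simps)
  also have "\<dots> \<le> a * (1 / exp (- 1))"
    using assms Gamma_plus_one_ge_exp_neg_one[OF assms]
    by (intro mult_left_mono frac_le) (auto simp: powr_le1)
  finally show ?thesis
    by (simp add: exp_minus field_simps)
qed

lemma inv_gamma_pdf_le_small_shape:
  assumes "0 < a" "a \<le> 1" "0 < u"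
  shows "u * inv_gamma_pdf a a u \<le> exp 1 * a"
proof -
  have "u * inv_gamma_pdf a a u = a powr a / Gamma a * (exp (- a / u) / u powr a)"
    using assms by (simp add: inv_gamma_pdf_def powr_add field_simps)
  also have "\<dots> \<le> exp 1 * a * 1"
    using assms exp_neg_div_le_powr[of a u] powr_self_div_Gamma_le[OF assms(1,2)]
    by (intro mult_mono) auto
  finally show ?thesis
    by simp
qed

lemma nn_integral_dilation_Ioi:
  fixes f :: "real \<Rightarrow> real"
  assumes f: "f \<in> borel_measurable borel" and "0 < s"
  shows "(\<integral>\<^sup>+u\<in>{0<..}. ennreal (s * f (s * u)) \<partial>lborel) = (\<integral>\<^sup>+t\<in>{0<..}. ennreal (f t) \<partial>lborel)"
proof -
  have "(\<integral>\<^sup>+t\<in>{0<..}. ennreal (f t) \<partial>lborel)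
      = ennreal s * (\<integral>\<^sup>+u. ennreal (f (s * u)) * indicator {0<..} (s * u) \<partial>lborel)"
    using f \<open>0 < s\<close> by (subst nn_integral_real_affine[where c = s and t = 0]) auto
  also have "\<dots> = (\<integral>\<^sup>+u\<in>{0<..}. ennreal (s * f (s * u)) \<partial>lborel)"
    using f \<open>0 < s\<close> by (subst nn_integral_cmult [symmetric])
      (auto intro!: nn_integral_cong simp: indicator_def zero_less_mult_iff ennreal_mult')
  finally show ?thesis ..
qed

definition inv_gamma_mixture :: "(real \<Rightarrow> real) \<Rightarrow> real \<Rightarrow> real \<Rightarrow> real \<Rightarrow> ennreal" where
  "inv_gamma_mixture \<pi> a b s =
     (\<integral>\<^sup>+u\<in>{0<..}. ennreal (inv_gamma_pdf a b u * (s * u * \<pi> (s * u))) \<partial>lborel)"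

lemma inv_gamma_mixture_le_small_shape:
  fixes \<pi> :: "real \<Rightarrow> real"
  assumes \<pi>: "\<pi> \<in> borel_measurable borel" "\<forall>t>0. 0 \<le> \<pi> t"
      "(\<integral>\<^sup>+t\<in>{0<..}. ennreal (\<pi> t) \<partial>lborel) = 1"
    and "0 < a" "a \<le> 1" "0 < s"
  shows "inv_gamma_mixture \<pi> a a s \<le> exp 1 * a"
proof -
  have "inv_gamma_pdf a a u * (s * u * \<pi> (s * u)) \<le> exp 1 * a * (s * \<pi> (s * u))" if "0 < u" for u
  proof -
    have "inv_gamma_pdf a a u * (s * u * \<pi> (s * u)) = u * inv_gamma_pdf a a u * (s * \<pi> (s * u))"
      by (simp add: ac_simps)
    also have "\<dots> \<le> exp 1 * a * (s * \<pi> (s * u))"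
      using inv_gamma_pdf_le_small_shape[OF \<open>0 < a\<close> \<open>a \<le> 1\<close> that] \<pi>(2) \<open>0 < s\<close> that
      by (intro mult_right_mono) auto
    finally show ?thesis .
  qed
  then have "inv_gamma_mixture \<pi> a a s
      \<le> (\<integral>\<^sup>+u\<in>{0<..}. ennreal (exp 1 * a) * ennreal (s * \<pi> (s * u)) \<partial>lborel)"
    using \<open>0 < a\<close> unfolding inv_gamma_mixture_def by (intro nn_integral_mono) (auto intro: ennreal_leI simp: indicator_def simp flip: ennreal_mult')
  also have "\<dots> = ennreal (exp 1 * a)"
    using \<pi> \<open>0 < s\<close> by (simp add: nn_integral_cmult mult.assoc nn_integral_dilation_Ioi)
  finally show ?thesis .
qed

lemma inv_gamma_mixture_le_bound:
  fixes \<pi> :: "real \<Rightarrow> real"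
  assumes bound: "\<forall>y>0. y * \<pi> y \<le> M" and "0 \<le> M" "0 < a" "0 < b" "0 < s"
  shows "inv_gamma_mixture \<pi> a b s \<le> M"
proof -
  have "inv_gamma_pdf a b u * (s * u * \<pi> (s * u)) \<le> M * inv_gamma_pdf a b u" if "0 < u" for u
  proof -
    have "s * u * \<pi> (s * u) \<le> M"
      using bound \<open>0 < s\<close> that by simp
    then show ?thesis
      using inv_gamma_pdf_nonneg[OF \<open>0 < a\<close>] by (metis mult.commute mult_left_mono)
  qed
  then have "inv_gamma_mixture \<pi> a b s
      \<le> (\<integral>\<^sup>+u\<in>{0<..}. ennreal M * ennreal (inv_gamma_pdf a b u) \<partial>lborel)"
    using \<open>0 \<le> M\<close> unfolding inv_gamma_mixture_def by (intro nn_integral_mono) (auto intro: ennreal_leI simp: indicator_def simp flip: ennreal_mult')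
  also have "\<dots> = M"
    using \<open>0 < a\<close> \<open>0 < b\<close> by (simp add: nn_integral_cmult mult.assoc nn_integral_inv_gamma_pdf)
  finally show ?thesis .
qed

lemma inv_gamma_mixture_le:
  fixes \<pi> :: "real \<Rightarrow> real"
  assumes \<pi>: "\<pi> \<in> borel_measurable borel" "\<forall>t>0. 0 \<le> \<pi> t"
      "(\<integral>\<^sup>+t\<in>{0<..}. ennreal (\<pi> t) \<partial>lborel) = 1"
    and bound: "\<forall>y>0. y * \<pi> y \<le> M" and "0 \<le> M" "0 < a" "0 < s"
  shows "inv_gamma_mixture \<pi> a a s \<le> (exp 1 + M) * min a (sqrt a)"
proof (cases "a \<le> 1")
  case True
  have "a = sqrt a * sqrt a"
    using \<open>0 < a\<close> by simp
  also have "\<dots> \<le> sqrt a * 1"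
    using True \<open>0 < a\<close> by (intro mult_left_mono) auto
  finally have "min a (sqrt a) = a"
    by simp
  moreover have "exp 1 * a \<le> (exp 1 + M) * a"
    using \<open>0 \<le> M\<close> \<open>0 < a\<close> by (intro mult_right_mono) auto
  ultimately show ?thesis
    using inv_gamma_mixture_le_small_shape[OF \<pi> \<open>0 < a\<close> True \<open>0 < s\<close>]
    by (metis ennreal_leI order_trans)
next
  case False
  then have "1 \<le> sqrt a"
    by simp
  then have "sqrt a * 1 \<le> sqrt a * sqrt a"
    by (intro mult_left_mono) auto
  then have "min a (sqrt a) = sqrt a"
    using \<open>0 < a\<close> by simp
  moreover have "M * 1 \<le> (exp 1 + M) * sqrt a"
    using \<open>0 \<le> M\<close> \<open>1 \<le> sqrt a\<close> by (intro mult_mono) auto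
  ultimately show ?thesis
    using inv_gamma_mixture_le_bound[OF bound \<open>0 \<le> M\<close> \<open>0 < a\<close> \<open>0 < a\<close> \<open>0 < s\<close>]
    by (metis ennreal_leI mult_1_right order_trans)
qed

lemma times_le_of_log_weighted_bound:
  fixes \<pi> :: "real \<Rightarrow> real"
  assumes "0 \<le> M" "- 1 \<le> c"
    and bound: "\<forall>t>0. t * \<pi> t \<le> M
        * (1 / (1 + ln (1 + 1 / t))) * (1 / (1 + ln (1 + t)))
        * (1 / (1 + ln (1 + ln (1 + 1 / t))) powr (1 + c))
        * (1 / (1 + ln (1 + ln (1 + t))) powr (1 + c))"
  shows "\<forall>t>0. t * \<pi> t \<le> M"
proof (intro allI impI)
  fix t :: real
  assume "0 < t"
  have inverse_unit: "0 \<le> 1 / x \<and> 1 / x \<le> 1" if "1 \<le> x" for x :: real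
    using that by simp
  have ln1: "1 \<le> 1 + ln (1 + y)" if "0 \<le> y" for y :: real
    using that by simp
  have ln2: "1 \<le> (1 + ln (1 + ln (1 + y))) powr (1 + c)" if "0 \<le> y" for y :: real
    using that \<open>- 1 \<le> c\<close> by (intro ge_one_powr_ge_zero) auto
  have "M * (1 / (1 + ln (1 + 1 / t))) * (1 / (1 + ln (1 + t)))
        * (1 / (1 + ln (1 + ln (1 + 1 / t))) powr (1 + c))
        * (1 / (1 + ln (1 + ln (1 + t))) powr (1 + c)) \<le> M * 1 * 1 * 1 * 1"
    using \<open>0 \<le> M\<close> \<open>0 < t\<close> inverse_unit[OF ln1] inverse_unit[OF ln2]
    by (intro mult_mono mult_nonneg_nonneg) auto
  then show "t * \<pi> t \<le> M"
    using bound \<open>0 < t\<close> by force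
qed

lemma ref_scale_pos:
  assumes "0 < C" "0 \<le> t"
  shows "0 < ref_scale C c t"
proof -
  have "0 \<le> ln (1 + t)"
    using assms by simp
  then have "0 \<le> ln (1 + ln (1 + t))"
    by (intro ln_ge_zero) simp
  then have "1 + ln (1 + ln (1 + t)) \<noteq> 0"
    by linarith
  with \<open>0 \<le> ln (1 + t)\<close> \<open>0 < C\<close> show ?thesis
    unfolding ref_scale_def by (intro divide_pos_pos mult_pos_pos) auto
qed

lemma one_plus_ln_one_plus_exp_le: "1 + ln (1 + exp x) \<le> 2 + \<bar>x :: real\<bar>"
proof -
  have "exp x \<le> exp \<bar>x\<bar>" "1 \<le> exp \<bar>x\<bar>"
    by simp_all
  then have "1 + exp x \<le> 2 * exp \<bar>x\<bar>"
    by linarith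
  then have "ln (1 + exp x) \<le> ln 2 + \<bar>x\<bar>"
    using ln_mono[of "1 + exp x" "2 * exp \<bar>x\<bar>"] by (simp add: ln_mult add_pos_pos)
  then show ?thesis
    using ln_2_less_1 by simp
qed

definition ref_scale_growth_const :: "real \<Rightarrow> real \<Rightarrow> real \<Rightarrow> real \<Rightarrow> real" where
  "ref_scale_growth_const C c a b =
     (2 + \<bar>a\<bar> + \<bar>b\<bar>) * (2 + ln (2 * (2 + \<bar>a\<bar> + \<bar>b\<bar>))) powr (1 + c) / C"

lemma inverse_ref_scale_exp_affine_le:
  fixes a b c C \<omega> :: real
  assumes "0 < C" "- 1 \<le> c" "exp 1 \<le> \<omega>"
  shows "1 / ref_scale C c (exp (a + b * \<omega>))
    \<le> ref_scale_growth_const C c a b * (\<omega> * ln \<omega> powr (1 + c))"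
proof -
  define P where "P = 2 + \<bar>a\<bar> + \<bar>b\<bar>"
  define t where "t = exp (a + b * \<omega>)"
  have "1 \<le> \<omega>"
    using assms(3) one_le_exp_iff[of 1] by linarith
  have "1 \<le> ln \<omega>"
    using assms(3) by (metis exp_gt_zero ln_exp ln_le_cancel_iff order.strict_trans2)
  have "1 \<le> P"
    unfolding P_def by simp
  have "0 < ln (1 + t)"
    unfolding t_def by (intro ln_gt_zero) simp
  have lin: "1 + ln (1 + t) \<le> P * \<omega>"
  proof -
    have "1 + ln (1 + t) \<le> 2 + \<bar>a\<bar> + \<bar>b\<bar> * \<omega>"
      using one_plus_ln_one_plus_exp_le[of "a + b * \<omega>"] abs_triangle_ineq[of a "b * \<omega>"] \<open>1 \<le> \<omega>\<close>
      unfolding t_def by (simp add: abs_mult)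
    also have "\<dots> \<le> P * \<omega>"
      using \<open>1 \<le> \<omega>\<close> mult_left_mono[of 1 \<omega> "2 + \<bar>a\<bar>"] unfolding P_def by (simp add: algebra_simps)
    finally show ?thesis .
  qed
  have loglog: "1 + ln (1 + ln (1 + t)) \<le> (2 + ln (2 * P)) * ln \<omega>"
  proof -
    have "1 + ln (1 + ln (1 + t)) \<le> 1 + ln (2 * P * \<omega>)"
      using lin \<open>1 \<le> P\<close> \<open>1 \<le> \<omega>\<close> \<open>0 < ln (1 + t)\<close> mult_mono[OF \<open>1 \<le> P\<close> \<open>1 \<le> \<omega>\<close>]
      by (intro add_left_mono ln_mono) auto
    also have "\<dots> = 1 + ln (2 * P) + ln \<omega>"
      using \<open>1 \<le> P\<close> \<open>1 \<le> \<omega>\<close> by (simp add: ln_mult)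
    also have "\<dots> \<le> (2 + ln (2 * P)) * ln \<omega>"
      using \<open>1 \<le> P\<close> \<open>1 \<le> ln \<omega>\<close> mult_left_mono[of 1 "ln \<omega>" "1 + ln (2 * P)"]
      by (simp add: algebra_simps)
    finally show ?thesis .
  qed
  have "1 / ref_scale C c t = (1 + ln (1 + t)) * (1 + ln (1 + ln (1 + t))) powr (1 + c) / C"
    unfolding ref_scale_def by simp
  also have "\<dots> \<le> (P * \<omega>) * ((2 + ln (2 * P)) * ln \<omega>) powr (1 + c) / C"
    using lin loglog \<open>0 < C\<close> \<open>- 1 \<le> c\<close> \<open>0 < ln (1 + t)\<close>
    by (intro divide_right_mono mult_mono powr_mono2) auto
  also have "\<dots> = ref_scale_growth_const C c a b * (\<omega> * ln \<omega> powr (1 + c))"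
    using \<open>1 \<le> P\<close> \<open>1 \<le> ln \<omega>\<close> by (simp add: ref_scale_growth_const_def P_def powr_mult)
  finally show ?thesis
    unfolding t_def .
qed

lemma f_fun_eq_inv_gamma_mixture:
  fixes \<pi> :: "real \<Rightarrow> real" and t \<gamma> z :: real
  assumes [measurable]: "\<pi> \<in> borel_measurable borel" and "0 < C" "0 < t" "0 \<le> \<gamma>"
  defines "s \<equiv> t powr \<gamma> * exp (\<gamma> * z)"
  shows "f_fun \<pi> C c \<alpha> z \<gamma> t = ennreal (\<gamma> / ref_scale C c t) * inv_gamma_mixture \<pi> \<alpha> \<alpha> s"
proof -
  have "0 \<le> \<gamma> / ref_scale C c t"
    using assms ref_scale_pos[of C t c] by simp
  then show ?thesis
    unfolding f_fun_def inv_gamma_mixture_def s_def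
    by (subst nn_integral_cmult [symmetric])
      (auto intro!: nn_integral_cong simp: inv_gamma_pdf_def ac_simps simp flip: ennreal_mult')
qed

lemma f_fun_le:
  fixes \<pi> :: "real \<Rightarrow> real"
  assumes \<pi>: "\<pi> \<in> borel_measurable borel" "\<forall>t>0. 0 \<le> \<pi> t"
      "(\<integral>\<^sup>+t\<in>{0<..}. ennreal (\<pi> t) \<partial>lborel) = 1"
    and bound: "\<forall>y>0. y * \<pi> y \<le> M" and "0 \<le> M" "0 < C" "0 < t" "0 < \<alpha>" "0 < \<gamma>"
    and R: "1 / ref_scale C c t \<le> R"
  shows "f_fun \<pi> C c \<alpha> z \<gamma> t \<le> (exp 1 + M) * R * min \<alpha> (sqrt \<alpha>) * \<gamma>"
proof -
  let ?w = "(exp 1 + M) * min \<alpha> (sqrt \<alpha>)"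
  have "0 < t powr \<gamma> * exp (\<gamma> * z)"
    using \<open>0 < t\<close> by simp
  note mixture = inv_gamma_mixture_le[OF \<pi> bound \<open>0 \<le> M\<close> \<open>0 < \<alpha>\<close> this]
  have "f_fun \<pi> C c \<alpha> z \<gamma> t \<le> ennreal (\<gamma> / ref_scale C c t) * ennreal ?w"
    using \<open>0 < C\<close> \<open>0 < t\<close> \<open>0 < \<gamma>\<close>
    by (simp only: f_fun_eq_inv_gamma_mixture[OF \<pi>(1)]) (intro mult_left_mono mixture, auto)
  also have "\<dots> = ennreal (?w * \<gamma> * (1 / ref_scale C c t))"
    using \<open>0 < \<gamma>\<close> ref_scale_pos[of C t c] \<open>0 < C\<close> \<open>0 < t\<close> by (simp add: mult.commute flip: ennreal_mult')
  also have "\<dots> \<le> ennreal (?w * \<gamma> * R)"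
    using R \<open>0 \<le> M\<close> \<open>0 < \<alpha>\<close> \<open>0 < \<gamma>\<close> by (intro ennreal_leI mult_left_mono) auto
  finally show ?thesis
    by (simp add: ac_simps)
qed

lemma f_fun_le_exp_affine:
  fixes \<pi> :: "real \<Rightarrow> real"
  assumes \<pi>: "\<pi> \<in> borel_measurable borel" "\<forall>t>0. 0 \<le> \<pi> t"
      "(\<integral>\<^sup>+t\<in>{0<..}. ennreal (\<pi> t) \<partial>lborel) = 1"
    and bound: "\<forall>y>0. y * \<pi> y \<le> M" and "0 \<le> M" "0 < C" "- 1 \<le> c" "0 < \<alpha>" "0 < \<gamma>"
    and "exp 1 \<le> \<omega>" "ref_scale_growth_const C c a b \<le> B"
  shows "f_fun \<pi> C c \<alpha> z \<gamma> (exp (a + b * \<omega>))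
    \<le> (exp 1 + M) * B * \<omega> * ln \<omega> powr (1 + c) * min \<alpha> (sqrt \<alpha>) * \<gamma>"
proof -
  have "0 \<le> \<omega>"
    using \<open>exp 1 \<le> \<omega>\<close> exp_ge_zero[of 1] by linarith
  then have "1 / ref_scale C c (exp (a + b * \<omega>)) \<le> B * (\<omega> * ln \<omega> powr (1 + c))"
    using inverse_ref_scale_exp_affine_le[OF \<open>0 < C\<close> \<open>- 1 \<le> c\<close> \<open>exp 1 \<le> \<omega>\<close>, of a b]
      mult_right_mono[OF \<open>ref_scale_growth_const C c a b \<le> B\<close>, of "\<omega> * ln \<omega> powr (1 + c)"]
    by simp
  from f_fun_le[OF \<pi> bound \<open>0 \<le> M\<close> \<open>0 < C\<close> exp_gt_zero \<open>0 < \<alpha>\<close> \<open>0 < \<gamma>\<close> this]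
  show ?thesis
    by (simp add: ac_simps)
qed

lemma finite_obtain_pos_upper_bound:
  fixes g :: "'a \<Rightarrow> real"
  assumes "finite I"
  obtains B where "0 < B" "\<And>i. i \<in> I \<Longrightarrow> g i \<le> B"
proof
  show "0 < 1 + (\<Sum>i\<in>I. \<bar>g i\<bar>)"
    by (simp add: add_pos_nonneg sum_nonneg)
  fix i assume "i \<in> I"
  have "g i \<le> (\<Sum>i\<in>I. \<bar>g i\<bar>)"
    using assms \<open>i \<in> I\<close> abs_ge_self[of "g i"] member_le_sum[of i I "\<lambda>i. \<bar>g i\<bar>"] by force
  then show "g i \<le> 1 + (\<Sum>i\<in>I. \<bar>g i\<bar>)"
    by simp
qed

theorem lemmaS5:
  fixes \<pi> :: "real \<Rightarrow> real" and c C M\<^sub>0 :: real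
    and n :: nat and x :: "nat \<Rightarrow> real ^ 'p"
    and K L :: "nat set" and tK a b :: "nat \<Rightarrow> real"
  assumes dens_meas: "\<pi> \<in> borel_measurable lborel"
    and dens_nonneg: "\<forall>t>0. \<pi> t \<ge> 0"
    and dens_int: "(\<integral>\<^sup>+ t \<in> {0<..}. ennreal (\<pi> t) \<partial>lborel) = 1"
    and c_pos: "c > 0" and C_pos: "C > 0" and M0_pos: "M\<^sub>0 > 0"
    and asymp: "(\<lambda>t. t * \<pi> t) \<sim>[at_top] (\<lambda>t. ref_scale C c t)"
    and bound: "\<forall>t>0. t * \<pi> t \<le> M\<^sub>0
        * (1 / (1 + ln (1 + 1 / t))) * (1 / (1 + ln (1 + t)))
        * (1 / (1 + ln (1 + ln (1 + 1 / t))) powr (1 + c))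
        * (1 / (1 + ln (1 + ln (1 + t))) powr (1 + c))"
    and partition: "K \<union> L = {1..n}" "K \<inter> L = {}"
    and tK_pos: "\<forall>i\<in>K. tK i > 0"
    and b_pos: "\<forall>i\<in>L. b i > 0"
  shows "\<exists>M>0. \<exists>\<omega>\<^sub>0>0. \<forall>\<omega>\<ge>\<omega>\<^sub>0. \<forall>i\<in>{1..n}. \<forall>\<alpha>>0. \<forall>\<beta>::real^'p. \<forall>\<gamma>>0.
           (i \<in> K \<longrightarrow> f_fun \<pi> C c \<alpha> (x i \<bullet> \<beta>) \<gamma> (tK i)
                        \<le> ennreal (M * min \<alpha> (sqrt \<alpha>) * \<gamma>)) \<and>
           (i \<in> L \<longrightarrow> f_fun \<pi> C c \<alpha> (x i \<bullet> \<beta>) \<gamma> (exp (a i + b i * \<omega>))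
                        \<le> ennreal (M * \<omega> * (ln \<omega>) powr (1 + c) * min \<alpha> (sqrt \<alpha>) * \<gamma>))"
proof -
  have \<pi>: "\<pi> \<in> borel_measurable borel" "\<forall>t>0. 0 \<le> \<pi> t"
      "(\<integral>\<^sup>+t\<in>{0<..}. ennreal (\<pi> t) \<partial>lborel) = 1"
    using dens_meas dens_nonneg dens_int by simp_all
  have \<pi>_le: "\<forall>y>0. y * \<pi> y \<le> M\<^sub>0"
    by (rule times_le_of_log_weighted_bound[OF less_imp_le[OF M0_pos] _ bound]) (use c_pos in linarith)
  note f_le = f_fun_le[OF \<pi> \<pi>_le less_imp_le[OF M0_pos] C_pos]
    and f_le_exp_affine = f_fun_le_exp_affine[OF \<pi> \<pi>_le less_imp_le[OF M0_pos] C_pos]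
  have "finite (K \<union> L)"
    unfolding partition(1) by simp
  then obtain B where "0 < B" and B: "\<And>i. i \<in> K \<union> L \<Longrightarrow>
      max (1 / ref_scale C c (tK i)) (ref_scale_growth_const C c (a i) (b i)) \<le> B"
    by (rule finite_obtain_pos_upper_bound) (rule that)
  have "- 1 \<le> c"
    using c_pos by linarith
  have K_case: "f_fun \<pi> C c \<alpha> z \<gamma> (tK i) \<le> (exp 1 + M\<^sub>0) * B * min \<alpha> (sqrt \<alpha>) * \<gamma>"
    if "i \<in> K" "0 < \<alpha>" "0 < \<gamma>" for i \<alpha> z \<gamma>
    using B[of i] tK_pos that by (intro f_le) auto
  have L_case: "f_fun \<pi> C c \<alpha> z \<gamma> (exp (a i + b i * \<omega>))
      \<le> (exp 1 + M\<^sub>0) * B * \<omega> * ln \<omega> powr (1 + c) * min \<alpha> (sqrt \<alpha>) * \<gamma>"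
    if "i \<in> L" "exp 1 \<le> \<omega>" "0 < \<alpha>" "0 < \<gamma>" for i \<omega> \<alpha> z \<gamma>
    using B[of i] \<open>- 1 \<le> c\<close> that by (intro f_le_exp_affine) auto
  have "0 < (exp 1 + M\<^sub>0) * B"
    using M0_pos \<open>0 < B\<close> by (simp add: add_pos_pos)
  then show ?thesis
    by (intro exI[of _ "(exp 1 + M\<^sub>0) * B"] exI[of _ "exp 1"] conjI allI ballI impI K_case L_case)
      auto
qed

end
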